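(* Let $A=\Gamma_R(Rx)$ be the free $DP$ algebra on one generator $x$, so that $A$ is the free $R$-module on $\{\gamma_n(x):n\ge1\}$. Write $\gamma_n=\gamma_n(x)$, $\gamma_0=1\in A_+$, and $\phi_n=\phi_n(dx)\in\Omega^{CA}_{A/R}$, where $\Omega^{CA}_{A/R}$ carries the $U(A)$-module structure for which $d$ is a $DP$ derivation. Then for every $n\ge1$: $$d\gamma_n=\sum_{i=0}^{n-1}\gamma_i\,\phi_{n-i}\qquad\text{and}\qquad \phi_n=\sum_{i=0}^{n-1}(-1)^i\gamma_i\,d\gamma_{n-i},$$ and as an $A_+$-module $$\Omega^{CA}_{A/R}\cong A_+\cdot dx\ \oplus\ \bigoplus_{p\ \text{prime}}\ \bigoplus_{e\ge1}(A_+/pA_+)\cdot\phi_{p^e},$$ where $A_+\cdot dx$ is free on $dx=d\gamma_1$ and each summand $(A_+/pA_+)\cdot\phi_{p^e}$ is cyclic generated by $\phi_{p^e}$ and isomorphic to $A_+/pA_+$.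
   Context: Fix a commutative unital ring $R$. An "algebra" means a commutative, not necessarily unital, $R$-algebra. A $DP$ algebra is an algebra $A$ with maps $\gamma_n:A\to A$ ($n\ge1$) such that for all $a,b\in A$, $r\in R$, $m,n\ge1$: $\gamma_1(a)=a$; $\gamma_n(a+b)=\gamma_n(a)+\sum_{i+j=n,\,i,j\ge1}\gamma_i(a)\gamma_j(b)+\gamma_n(b)$; $\gamma_n(ab)=a^n\gamma_n(b)$; $\gamma_n(rb)=r^n\gamma_n(b)$; $\gamma_m(a)\gamma_n(a)=\frac{(m+n)!}{m!\,n!}\gamma_{m+n}(a)$; $\gamma_m(\gamma_n(a))=\frac{(mn)!}{m!(n!)^m}\gamma_{mn}(a)$. $\Gamma_R(Rx)$ is the free $DP$ algebra on the free rank-one $R$-module with basis $x$. $A_+=A\oplus R$ is the unital algebra with $(a,r)(b,s)=(ab+sa+rb,rs)$. $\Omega^{CA}_{A/R}=(A_+\otimes A)/(a\otimes b-1\otimes ab+b\otimes a)$ with $da=[1\otimes a]$. A left $U(A)$-module is an $A_+$-module $M$ with pairwise commuting additive operators $\phi_p$ ($p$ prime) satisfying $p\phi_p=0$, $\phi_p(rx)=r^p\phi_p(x)$ for $r\in R$, and $\phi_p(ax)=0$ for $a\in A$; set $\phi_1=\mathrm{id}$, $\phi_{p^e}=\phi_p^e$, $\phi_n=0$ for $n>1$ not a prime power. A $DP$ derivation $s:A\to M$ is an $R$-linear map with $s(ab)=as(b)+bs(a)$ and $s(\gamma_n a)=\phi_n(sa)+\sum_{i+j=n,\,i,j\ge1}\gamma_i(a)\phi_j(sa)$.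 There is a unique $U(A)$-module structure on $\Omega^{CA}_{A/R}$ extending its $A_+$-module structure for which $d$ is a $DP$ derivation; this is the structure used. *)

theory Defs
  imports "HOL-Library.Poly_Mapping" "HOL-Number_Theory.Number_Theory"
begin

text \<open>Elements of A_+ = Gamma_R(Rx) (+) R are finitely supported coefficient
 sequences: the coefficient at n is that of gamma_n(x), with gamma_0 = 1.
 A itself is the subset with vanishing coefficient at 0.
 NOTE: the multiplication of A_+ is dpmult below, NOT the convolution
 product of the Poly_Mapping type, which is never used.\<close>

type_synonym 'r dpa = "nat \<Rightarrow>\<^sub>0 'r"

definition dpA :: "'r::comm_ring_1 dpa set" where
  "dpA = {a. Poly_Mapping.lookup a 0 = 0}"

definition gam :: "nat \<Rightarrow> 'r::comm_ring_1 dpa" where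
  "gam n = Poly_Mapping.single n 1"

definition dpmult :: "'r::comm_ring_1 dpa \<Rightarrow> 'r dpa \<Rightarrow> 'r dpa" where
  "dpmult a b = (\<Sum>i\<in>Poly_Mapping.keys a. \<Sum>j\<in>Poly_Mapping.keys b.
      Poly_Mapping.single (i + j) (of_nat ((i + j) choose i) * Poly_Mapping.lookup a i * Poly_Mapping.lookup b j))"

definition dpsmult :: "'r::comm_ring_1 \<Rightarrow> 'r dpa \<Rightarrow> 'r dpa" where
  "dpsmult r a = Poly_Mapping.map ((*) r) a"

definition dppow :: "'r::comm_ring_1 dpa \<Rightarrow> nat \<Rightarrow> 'r dpa" where
  "dppow a n = ((dpmult a) ^^ n) (gam 0)"

text \<open>DP structure on A (maps gamma_n : A -> A, n >= 1) satisfying the axioms,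
 and sending x = gamma_1 to the basis element gamma_n. Such a structure is the
 one of the free DP algebra Gamma_R(Rx).\<close>
definition is_DP_structure :: "(nat \<Rightarrow> 'r::comm_ring_1 dpa \<Rightarrow> 'r dpa) \<Rightarrow> bool" where
  "is_DP_structure g \<longleftrightarrow>
     (\<forall>n\<ge>1. \<forall>a\<in>dpA. g n a \<in> dpA) \<and>
     (\<forall>a\<in>dpA. g 1 a = a) \<and>
     (\<forall>n\<ge>1. \<forall>a\<in>dpA. \<forall>b\<in>dpA.
        g n (a + b) = g n a + (\<Sum>i\<in>{1..<n}. dpmult (g i a) (g (n - i) b)) + g n b) \<and>
     (\<forall>n\<ge>1. \<forall>a\<in>dpA. \<forall>b\<in>dpA. g n (dpmult a b) = dpmult (dppow a n) (g n b)) \<and>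
     (\<forall>n\<ge>1. \<forall>r. \<forall>b\<in>dpA. g n (dpsmult r b) = dpsmult (r ^ n) (g n b)) \<and>
     (\<forall>m\<ge>1. \<forall>n\<ge>1. \<forall>a\<in>dpA.
        dpmult (g m a) (g n a) = dpsmult (of_nat ((m + n) choose m)) (g (m + n) a)) \<and>
     (\<forall>m\<ge>1. \<forall>n\<ge>1. \<forall>a\<in>dpA.
        g m (g n a) = dpsmult (of_nat (fact (m * n) div (fact m * fact n ^ m))) (g (m * n) a))"

definition is_free_DP_structure :: "(nat \<Rightarrow> 'r::comm_ring_1 dpa \<Rightarrow> 'r dpa) \<Rightarrow> bool" where
  "is_free_DP_structure g \<longleftrightarrow> is_DP_structure g \<and> (\<forall>n\<ge>1. g n (gam 1) = gam n)"

text \<open>A_+ (x)_R A is realised inside the free R-module on pairs (i,j)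
 (basis gamma_i (x) gamma_j), as those elements supported on j >= 1
 (A is a direct summand of the free module A_+).\<close>

type_synonym 'r ten = "(nat \<times> nat) \<Rightarrow>\<^sub>0 'r"

definition tenspace :: "'r::comm_ring_1 ten set" where
  "tenspace = {t. \<forall>k\<in>Poly_Mapping.keys t. 1 \<le> snd k}"

definition ten :: "'r::comm_ring_1 dpa \<Rightarrow> 'r dpa \<Rightarrow> 'r ten" where
  "ten a b = (\<Sum>i\<in>Poly_Mapping.keys a. \<Sum>j\<in>Poly_Mapping.keys b. Poly_Mapping.single (i, j) (Poly_Mapping.lookup a i * Poly_Mapping.lookup b j))"

definition tsmult :: "'r::comm_ring_1 \<Rightarrow> 'r ten \<Rightarrow> 'r ten" where
  "tsmult r t = Poly_Mapping.map ((*) r) t"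

definition tact :: "'r::comm_ring_1 dpa \<Rightarrow> 'r ten \<Rightarrow> 'r ten" where
  "tact a t = (\<Sum>k\<in>Poly_Mapping.keys t. tsmult (Poly_Mapping.lookup t k) (ten (dpmult a (gam (fst k))) (gam (snd k))))"

inductive_set Krel :: "'r::comm_ring_1 ten set" where
  Krel_zero: "0 \<in> Krel"
| Krel_gen: "a \<in> dpA \<Longrightarrow> b \<in> dpA \<Longrightarrow> ten a b - ten (gam 0) (dpmult a b) + ten b a \<in> Krel"
| Krel_add: "x \<in> Krel \<Longrightarrow> y \<in> Krel \<Longrightarrow> x + y \<in> Krel"
| Krel_smult: "x \<in> Krel \<Longrightarrow> tsmult r x \<in> Krel"
| Krel_act: "x \<in> Krel \<Longrightarrow> tact c x \<in> Krel"

definition omeq :: "'r::comm_ring_1 ten \<Rightarrow> 'r ten \<Rightarrow> bool" where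
  "omeq s t \<longleftrightarrow> s - t \<in> Krel"

definition dd :: "'r::comm_ring_1 dpa \<Rightarrow> 'r ten" where
  "dd a = ten (gam 0) a"

text \<open>ph p is the operator phi_p (p prime), acting on representatives.\<close>
definition is_UA_structure :: "(nat \<Rightarrow> 'r::comm_ring_1 ten \<Rightarrow> 'r ten) \<Rightarrow> bool" where
  "is_UA_structure ph \<longleftrightarrow>
    (\<forall>p. prime p \<longrightarrow>
      (\<forall>t\<in>tenspace. ph p t \<in> tenspace) \<and>
      (\<forall>s\<in>tenspace. \<forall>t\<in>tenspace. omeq s t \<longrightarrow> omeq (ph p s) (ph p t)) \<and>
      (\<forall>s\<in>tenspace. \<forall>t\<in>tenspace. omeq (ph p (s + t)) (ph p s + ph p t)) \<and>
      (\<forall>t\<in>tenspace. omeq (tsmult (of_nat p) (ph p t)) 0) \<and>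
      (\<forall>r. \<forall>t\<in>tenspace. omeq (ph p (tsmult r t)) (tsmult (r ^ p) (ph p t))) \<and>
      (\<forall>a\<in>dpA. \<forall>t\<in>tenspace. omeq (ph p (tact a t)) 0) \<and>
      (\<forall>q. prime q \<longrightarrow> (\<forall>t\<in>tenspace. omeq (ph p (ph q t)) (ph q (ph p t)))))"

definition phin :: "(nat \<Rightarrow> 'r::comm_ring_1 ten \<Rightarrow> 'r ten) \<Rightarrow> nat \<Rightarrow> 'r ten \<Rightarrow> 'r ten" where
  "phin ph n t = (if n = 1 then t
     else if primepow n then (ph (aprimedivisor n) ^^ multiplicity (aprimedivisor n) n) t
     else 0)"

text \<open>d is a DP derivation (R-linearity and the Leibniz rule hold for d
 automatically by construction of Omega; the DP condition is imposed).\<close>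
definition is_DP_derivation_d ::
  "(nat \<Rightarrow> 'r::comm_ring_1 dpa \<Rightarrow> 'r dpa) \<Rightarrow> (nat \<Rightarrow> 'r ten \<Rightarrow> 'r ten) \<Rightarrow> bool" where
  "is_DP_derivation_d g ph \<longleftrightarrow>
    (\<forall>n\<ge>1. \<forall>a\<in>dpA. omeq (dd (g n a))
        (phin ph n (dd a) + (\<Sum>i\<in>{1..<n}. tact (g i a) (phin ph (n - i) (dd a)))))"

end

theory Submission
  imports Defs
begin

text \<open>The first formula is the DP-derivation rule for \<open>d\<close> applied to \<open>\<gamma>\<^sub>n(x)\<close>; substituting it
  into the right-hand side of the second one leaves alternating binomial sums, which vanish except
  in degree 0. By the first formula every \<open>\<gamma>\<^sub>i \<otimes> \<gamma>\<^sub>j = \<gamma>\<^sub>i d\<gamma>\<^sub>j\<close> is a combination of the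
  \<open>\<gamma>\<^sub>k \<phi>\<^sub>m\<close>, and \<open>\<phi>\<^sub>m = 0\<close> unless \<open>m = 1\<close> or \<open>m\<close> is a prime power; this gives the
  generators, and \<open>p \<phi>\<^sub>p = 0\<close> gives the torsion.

  Independence and the exact annihilators come from the contractions \<open>a \<otimes> b \<mapsto> a \<partial>\<^sub>q b\<close> with
  \<open>\<partial>\<^sub>q \<gamma>\<^sub>j = \<gamma>\<^bsub>j-q\<^esub>\<close>. For \<open>q = 1\<close> the operator \<open>\<partial>\<^sub>q\<close> is a derivation of \<open>A\<close>, and for \<open>q = p\<^sup>e\<close>
  it is one modulo \<open>p\<close> (Vandermonde, and \<open>p\<close> divides \<open>p\<^sup>e choose k\<close> for \<open>0 < k < p\<^sup>e\<close>), so the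
  contraction descends to \<open>\<Omega> \<rightarrow> A\<^sub>+\<close>, resp. \<open>\<Omega> \<rightarrow> A\<^sub>+/p\<close>. By the second formula it sends
  \<open>\<phi>\<^sub>n\<close> to \<open>1\<close> if \<open>n = q\<close> and to \<open>0\<close> otherwise, so it reads off the coefficient of \<open>\<phi>\<^sub>q\<close>.\<close>

(* [single 0 1 = 1] would turn gam 0 into the unit of the convolution product of
   Poly_Mapping, which has nothing to do with the product dpmult of A_+. *)
declare single_one [simp del]

section \<open>Additive maps on finitely supported functions\<close>

definition pm_extend :: "('k \<Rightarrow> 'r::zero \<Rightarrow> 'm::comm_monoid_add) \<Rightarrow> ('k \<Rightarrow>\<^sub>0 'r) \<Rightarrow> 'm" where
  "pm_extend f a = (\<Sum>k\<in>Poly_Mapping.keys a. f k (Poly_Mapping.lookup a k))"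

lemma pm_extend_single: "f k 0 = 0 \<Longrightarrow> pm_extend f (Poly_Mapping.single k v) = f k v"
  by (simp add: pm_extend_def)

lemma additive_pm_extend:
  fixes f :: "'k \<Rightarrow> 'r::ab_group_add \<Rightarrow> 'm::ab_group_add"
  assumes "\<And>k. additive (f k)"
  shows "additive (pm_extend f)"
proof
  fix a b :: "'k \<Rightarrow>\<^sub>0 'r"
  let ?S = "Poly_Mapping.keys a \<union> Poly_Mapping.keys b"
  have f0: "f k 0 = 0" for k by (rule additive.zero[OF assms])
  have ext: "pm_extend f c = (\<Sum>k\<in>?S. f k (Poly_Mapping.lookup c k))"
    if "Poly_Mapping.keys c \<subseteq> ?S" for c
    unfolding pm_extend_def using that f0 by (intro sum.mono_neutral_left) (auto simp: in_keys_iff)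
  have "pm_extend f (a + b) = (\<Sum>k\<in>?S. f k (Poly_Mapping.lookup (a + b) k))"
    using keys_add[of a b] by (intro ext)
  also have "\<dots> = (\<Sum>k\<in>?S. f k (Poly_Mapping.lookup a k)) + (\<Sum>k\<in>?S. f k (Poly_Mapping.lookup b k))"
    by (simp add: lookup_add additive.add[OF assms] sum.distrib)
  also have "\<dots> = pm_extend f a + pm_extend f b"
    by (simp add: ext)
  finally show "pm_extend f (a + b) = pm_extend f a + pm_extend f b" .
qed

lemma additive_pm_extend_fun:
  assumes "\<And>k v. additive (\<lambda>x. f x k v)"
  shows "additive (\<lambda>x. pm_extend (f x) a)"
  by standard (simp add: pm_extend_def additive.add[OF assms] sum.distrib)

lemma sum_single_lookup: "(\<Sum>k\<in>Poly_Mapping.keys a. Poly_Mapping.single k (Poly_Mapping.lookup a k)) = a"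
  by (rule poly_mapping_eqI) (simp add: lookup_sum lookup_single when_def in_keys_iff)

lemma additive_eq_on_singles:
  assumes "additive F" "additive G"
    and "\<And>k v. F (Poly_Mapping.single k v) = G (Poly_Mapping.single k v)"
  shows "F a = G a"
proof -
  have "F a = F (\<Sum>k\<in>Poly_Mapping.keys a. Poly_Mapping.single k (Poly_Mapping.lookup a k))"
    by (simp only: sum_single_lookup)
  also have "\<dots> = (\<Sum>k\<in>Poly_Mapping.keys a. F (Poly_Mapping.single k (Poly_Mapping.lookup a k)))"
    by (rule additive.sum[OF assms(1)])
  also have "\<dots> = (\<Sum>k\<in>Poly_Mapping.keys a. G (Poly_Mapping.single k (Poly_Mapping.lookup a k)))"
    by (simp add: assms(3))
  also have "\<dots> = G (\<Sum>k\<in>Poly_Mapping.keys a. Poly_Mapping.single k (Poly_Mapping.lookup a k))"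
    by (rule additive.sum[OF assms(2), symmetric])
  also have "\<dots> = G a"
    by (simp only: sum_single_lookup)
  finally show ?thesis .
qed

lemma additive_compose: "additive f \<Longrightarrow> additive g \<Longrightarrow> additive (\<lambda>x. f (g x))"
  by (simp add: additive_def)

definition biadditive :: "('a::ab_group_add \<Rightarrow> 'b::ab_group_add \<Rightarrow> 'c::ab_group_add) \<Rightarrow> bool" where
  "biadditive F \<longleftrightarrow> (\<forall>b. additive (\<lambda>a. F a b)) \<and> (\<forall>a. additive (F a))"

lemma additive_id: "additive (\<lambda>x. x)"
  by (simp add: additive_def)

lemma biadditive_compose_left:
  assumes "additive f" "biadditive F"
  shows "biadditive (\<lambda>a b. f (F a b))"
  using assms(2) unfolding biadditive_def
  by (auto intro: additive_compose[OF assms(1)])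

lemma biadditive_compose_right:
  assumes "biadditive F" "additive g" "additive h"
  shows "biadditive (\<lambda>a b. F (g a) (h b))"
  using assms(1) unfolding biadditive_def
  by (auto intro: additive_compose[of "\<lambda>a. F a _" g, OF _ assms(2)]
      additive_compose[of "F _" h, OF _ assms(3)])

lemma biadditive_eq_on_singles:
  assumes F: "biadditive F" and G: "biadditive G"
    and singles: "\<And>i x j y. F (Poly_Mapping.single i x) (Poly_Mapping.single j y) =
                            G (Poly_Mapping.single i x) (Poly_Mapping.single j y)"
  shows "F a b = G a b"
proof -
  have F1: "additive (\<lambda>a. F a b)" and F2: "additive (F a)" for a b
    using F by (simp_all add: biadditive_def)
  have G1: "additive (\<lambda>a. G a b)" and G2: "additive (G a)" for a b
    using G by (simp_all add: biadditive_def)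
  have "F a (Poly_Mapping.single j y) = G a (Poly_Mapping.single j y)" for j y
    by (rule additive_eq_on_singles[OF F1 G1 singles])
  then show ?thesis
    by (rule additive_eq_on_singles[OF F2 G2])
qed

lemma biadditive_pm_extend2:
  assumes "\<And>i j. biadditive (h i j)"
  shows "biadditive (\<lambda>a b. pm_extend (\<lambda>i x. pm_extend (\<lambda>j y. h i j x y) b) a)"
  unfolding biadditive_def
proof (intro allI conjI)
  show "additive (\<lambda>a. pm_extend (\<lambda>i x. pm_extend (\<lambda>j y. h i j x y) b) a)" for b
    using assms by (intro additive_pm_extend additive_pm_extend_fun) (simp_all add: biadditive_def)
  show "additive (\<lambda>b. pm_extend (\<lambda>i x. pm_extend (\<lambda>j y. h i j x y) b) a)" for a
    using assms by (intro additive_pm_extend_fun additive_pm_extend) (simp_all add: biadditive_def)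
qed

lemma lookup_map_mult: "Poly_Mapping.lookup (Poly_Mapping.map ((*) r) a) k = r * Poly_Mapping.lookup a k"
  for r :: "'r::semiring_0"
  by (simp add: map.rep_eq when_def)

lemma additive_map_mult: "additive (Poly_Mapping.map ((*) r))"
  for r :: "'r::ring"
  by standard (rule poly_mapping_eqI, simp add: lookup_map_mult lookup_add distrib_left)

lemma additive_map_mult_scalar: "additive (\<lambda>r. Poly_Mapping.map ((*) r) a)"
  for a :: "'k \<Rightarrow>\<^sub>0 'r::ring"
  by standard (rule poly_mapping_eqI, simp add: lookup_map_mult lookup_add distrib_right)

lemma map_mult_map_mult:
  "Poly_Mapping.map ((*) r) (Poly_Mapping.map ((*) s) a) = Poly_Mapping.map ((*) (r * s)) a"
  for r :: "'r::semiring_0"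
  by (rule poly_mapping_eqI) (simp add: lookup_map_mult mult.assoc)

lemma map_mult_one: "Poly_Mapping.map ((*) (1::'r::semiring_1)) a = a"
  by (rule poly_mapping_eqI) (simp add: lookup_map_mult)

lemma map_mult_minus_one: "Poly_Mapping.map ((*) (-1::'r::ring_1)) a = - a"
  by (rule poly_mapping_eqI) (simp add: lookup_map_mult)

lemma dpsmult_single [simp]: "dpsmult r (Poly_Mapping.single k v) = Poly_Mapping.single k (r * v)"
  by (simp add: dpsmult_def)

lemma tsmult_single [simp]: "tsmult r (Poly_Mapping.single k v) = Poly_Mapping.single k (r * v)"
  by (simp add: tsmult_def)

lemma additive_dpsmult: "additive (dpsmult r)"
  unfolding dpsmult_def by (rule additive_map_mult)

lemma additive_tsmult: "additive (tsmult r)"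
  unfolding tsmult_def by (rule additive_map_mult)

lemma additive_tsmult_scalar: "additive (\<lambda>r. tsmult r t)"
  unfolding tsmult_def by (rule additive_map_mult_scalar)

lemma dpsmult_zero [simp]: "dpsmult r 0 = 0"
  by (rule additive.zero[OF additive_dpsmult])

lemma dpsmult_zero_scalar [simp]: "dpsmult 0 a = 0"
  unfolding dpsmult_def by (rule additive.zero[OF additive_map_mult_scalar])

lemma dpsmult_dpsmult: "dpsmult r (dpsmult s a) = dpsmult (r * s) a"
  unfolding dpsmult_def by (rule map_mult_map_mult)

lemma tsmult_tsmult: "tsmult r (tsmult s t) = tsmult (r * s) t"
  unfolding tsmult_def by (rule map_mult_map_mult)

lemma tsmult_one [simp]: "tsmult 1 t = t"
  unfolding tsmult_def by (rule map_mult_one)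

lemma tsmult_zero_scalar [simp]: "tsmult 0 t = 0"
  by (rule additive.zero[OF additive_tsmult_scalar])

lemma tsmult_minus_one: "tsmult (-1) t = - t"
  unfolding tsmult_def by (rule map_mult_minus_one)

section \<open>The algebra \<open>A\<^sub>+\<close> and the \<open>A\<^sub>+\<close>-module \<open>A\<^sub>+ \<otimes> A\<close>\<close>

lemma multinomial_choose_commute:
  "((a + b + c) choose (a + b)) * ((a + b) choose a) = ((a + b + c) choose a) * ((b + c) choose b)"
  using choose_mult_lemma[of b c a] by (simp add: add_ac)

lemma biadditive_dpmult: "biadditive dpmult"
proof -
  have dpmult_eq: "dpmult = (\<lambda>a b. pm_extend (\<lambda>i x. pm_extend (\<lambda>j y.
      Poly_Mapping.single (i + j) (of_nat ((i + j) choose i) * x * y)) b) a)"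
    by (intro ext) (simp add: dpmult_def pm_extend_def)
  show ?thesis
    unfolding dpmult_eq by (intro biadditive_pm_extend2)
      (simp add: biadditive_def additive_def distrib_left distrib_right single_add)
qed

lemma additive_dpmult_left: "additive (\<lambda>a. dpmult a b)"
  and additive_dpmult_right: "additive (dpmult a)"
  using biadditive_dpmult unfolding biadditive_def by blast+

lemma dpmult_zero_right [simp]: "dpmult a 0 = 0"
  by (rule additive.zero[OF additive_dpmult_right])

lemma dpmult_single [simp]:
  "dpmult (Poly_Mapping.single i x) (Poly_Mapping.single j y) =
   Poly_Mapping.single (i + j) (of_nat ((i + j) choose i) * x * y)"
  by (simp add: dpmult_def)

lemma biadditive_ten: "biadditive ten"
proof -
  have ten_eq: "ten = (\<lambda>a b. pm_extend (\<lambda>i x. pm_extend (\<lambda>j y. Poly_Mapping.single (i, j) (x * y)) b) a)"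
    by (intro ext) (simp add: ten_def pm_extend_def)
  show ?thesis
    unfolding ten_eq by (intro biadditive_pm_extend2)
      (simp add: biadditive_def additive_def distrib_left distrib_right single_add)
qed

lemma additive_ten_left: "additive (\<lambda>a. ten a b)"
  and additive_ten_right: "additive (ten a)"
  using biadditive_ten unfolding biadditive_def by blast+

lemma ten_single [simp]:
  "ten (Poly_Mapping.single i x) (Poly_Mapping.single j y) = Poly_Mapping.single (i, j) (x * y)"
  by (simp add: ten_def)

lemma biadditive_tact: "biadditive (tact :: 'r::comm_ring_1 dpa \<Rightarrow> _)"
proof -
  have tact_eq: "tact c = pm_extend (\<lambda>k v. tsmult v (ten (dpmult c (gam (fst k))) (gam (snd k))))"
    for c :: "'r dpa"
    by (intro ext) (simp add: tact_def pm_extend_def)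
  have "additive (\<lambda>c :: 'r dpa. tsmult v (ten (dpmult c (gam i)) (gam j)))" for v i j
    by (intro additive_compose[OF additive_tsmult] additive_compose[OF additive_ten_left]
        additive_dpmult_left)
  then have "additive (\<lambda>c :: 'r dpa. tact c t)" for t
    unfolding tact_eq by (intro additive_pm_extend_fun) simp
  moreover have "additive (tact c)" for c :: "'r dpa"
    unfolding tact_eq by (intro additive_pm_extend additive_tsmult_scalar)
  ultimately show ?thesis by (simp add: biadditive_def)
qed

lemma tact_single [simp]:
  "tact (Poly_Mapping.single m w) (Poly_Mapping.single k v) =
   Poly_Mapping.single (m + fst k, snd k) (v * (of_nat ((m + fst k) choose m) * w))"
  by (simp add: tact_def gam_def)

lemma additive_tact_left: "additive (\<lambda>c. tact c t)"
  and additive_tact_right: "additive (tact c)"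
  using biadditive_tact unfolding biadditive_def by blast+

lemma tact_add_left: "tact (c + c') t = tact c t + tact c' t"
  by (rule additive.add[OF additive_tact_left])

lemma tact_sum_right: "tact c (sum f S) = (\<Sum>x\<in>S. tact c (f x))"
  by (rule additive.sum[OF additive_tact_right])

lemma tact_zero_left [simp]: "tact 0 t = 0"
  by (rule additive.zero[OF additive_tact_left])

lemma tact_zero_right [simp]: "tact c 0 = 0"
  by (rule additive.zero[OF additive_tact_right])

lemma tact_gam_0 [simp]: "tact (gam 0) t = t"
  by (rule additive_eq_on_singles[where G = "\<lambda>t. t", OF additive_tact_right])
    (auto simp: gam_def additive_def)

lemma tact_tact:
  fixes a b :: "'r::comm_ring_1 dpa"
  shows "tact a (tact b t) = tact (dpmult a b) t"
proof (rule additive_eq_on_singles[where F = "\<lambda>t. tact a (tact b t)"])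
  show "additive (\<lambda>t. tact a (tact b t))"
    by (rule additive_compose[OF additive_tact_right additive_tact_right])
  show "additive (tact (dpmult a b))"
    by (rule additive_tact_right)
  fix k :: "nat \<times> nat" and v :: 'r
  obtain i j where k: "k = (i, j)" by fastforce
  have "biadditive (\<lambda>a b. tact a (tact b (Poly_Mapping.single k v)))"
    by (rule biadditive_compose_right[OF biadditive_tact additive_id additive_tact_left])
  moreover have "biadditive (\<lambda>a b. tact (dpmult a b) (Poly_Mapping.single k v))"
    by (rule biadditive_compose_left[OF additive_tact_left biadditive_dpmult])
  moreover have "tact (Poly_Mapping.single m w) (tact (Poly_Mapping.single n u) (Poly_Mapping.single k v)) =
      tact (dpmult (Poly_Mapping.single m w) (Poly_Mapping.single n u)) (Poly_Mapping.single k v)"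
    for m w n u
  proof -
    have "of_nat ((m + n + i) choose (m + n)) * of_nat ((m + n) choose m) =
        (of_nat ((m + n + i) choose m) * of_nat ((n + i) choose n) :: 'r)"
      unfolding of_nat_mult[symmetric] multinomial_choose_commute ..
    then show ?thesis
      by (simp add: k add.assoc) (simp add: ac_simps)
  qed
  ultimately show "tact a (tact b (Poly_Mapping.single k v)) = tact (dpmult a b) (Poly_Mapping.single k v)"
    by (rule biadditive_eq_on_singles)
qed

lemma tact_dpsmult: "tact (dpsmult r c) t = tsmult r (tact c t)"
proof (rule biadditive_eq_on_singles[where F = "\<lambda>c t. tact (dpsmult r c) t"])
  show "biadditive (\<lambda>c t. tact (dpsmult r c) t)"
    by (rule biadditive_compose_right[OF biadditive_tact additive_dpsmult additive_id])
  show "biadditive (\<lambda>c t. tsmult r (tact c t))"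
    by (rule biadditive_compose_left[OF additive_tsmult biadditive_tact])
qed (simp add: ac_simps)

lemma tact_tsmult: "tact c (tsmult r t) = tsmult r (tact c t)"
proof (rule biadditive_eq_on_singles[where F = "\<lambda>c t. tact c (tsmult r t)"])
  show "biadditive (\<lambda>c t. tact c (tsmult r t))"
    by (rule biadditive_compose_right[OF biadditive_tact additive_id additive_tsmult])
  show "biadditive (\<lambda>c t. tsmult r (tact c t))"
    by (rule biadditive_compose_left[OF additive_tsmult biadditive_tact])
qed (simp add: ac_simps)

lemma dpmult_gam_0_right [simp]: "dpmult a (gam 0) = a"
  by (rule additive_eq_on_singles[where G = "\<lambda>a. a", OF additive_dpmult_left])
    (auto simp: gam_def additive_def)

lemma dpmult_dpsmult_right: "dpmult c (dpsmult r a) = dpsmult r (dpmult c a)"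
proof (rule biadditive_eq_on_singles[where F = "\<lambda>c a. dpmult c (dpsmult r a)"])
  show "biadditive (\<lambda>c a. dpmult c (dpsmult r a))"
    by (rule biadditive_compose_right[OF biadditive_dpmult additive_id additive_dpsmult])
  show "biadditive (\<lambda>c a. dpsmult r (dpmult c a))"
    by (rule biadditive_compose_left[OF additive_dpsmult biadditive_dpmult])
qed (simp add: ac_simps)

lemma dpmult_gam_gam: "dpmult (gam i) (gam j) = dpsmult (of_nat ((i + j) choose i)) (gam (i + j))"
  by (simp add: gam_def)

lemma dd_gam: "dd (gam j) = Poly_Mapping.single (0, j) 1"
  by (simp add: dd_def gam_def)

lemma tact_gam_dd_gam: "tact (gam i) (dd (gam j)) = Poly_Mapping.single (i, j) 1"
  unfolding dd_gam by (simp add: gam_def)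

lemma Krel_uminus: "t \<in> Krel \<Longrightarrow> - t \<in> Krel"
  using Krel_smult[of t "-1"] by (simp add: tsmult_minus_one)

lemma omeq_refl [simp]: "omeq t t"
  by (simp add: omeq_def Krel_zero)

lemma omeq_sym: "omeq s t \<Longrightarrow> omeq t s"
  unfolding omeq_def using Krel_uminus by fastforce

lemma omeq_trans [trans]: "omeq s t \<Longrightarrow> omeq t u \<Longrightarrow> omeq s u"
  unfolding omeq_def using Krel_add by fastforce

lemma omeq_add: "omeq s s' \<Longrightarrow> omeq t t' \<Longrightarrow> omeq (s + t) (s' + t')"
  unfolding omeq_def using Krel_add by (fastforce simp: algebra_simps)

lemma omeq_sum: "(\<And>x. x \<in> S \<Longrightarrow> omeq (f x) (g x)) \<Longrightarrow> omeq (sum f S) (sum g S)"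
  by (induction S rule: infinite_finite_induct) (simp_all add: omeq_add)

lemma omeq_tact: "omeq s t \<Longrightarrow> omeq (tact c s) (tact c t)"
  unfolding omeq_def using Krel_act[of "s - t" c] by (simp add: additive.diff[OF additive_tact_right])

lemma omeq_tsmult: "omeq s t \<Longrightarrow> omeq (tsmult r s) (tsmult r t)"
  unfolding omeq_def using Krel_smult[of "s - t" r] by (simp add: additive.diff[OF additive_tsmult])

section \<open>The differentials \<open>d\<gamma>\<^sub>n\<close> in terms of the \<open>\<phi>\<^sub>n\<close> and back\<close>

abbreviation dx :: "'r::comm_ring_1 ten" where
  "dx \<equiv> dd (gam 1)"

abbreviation phi_dx :: "(nat \<Rightarrow> 'r::comm_ring_1 ten \<Rightarrow> 'r ten) \<Rightarrow> nat \<Rightarrow> 'r ten" where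
  "phi_dx ph n \<equiv> phin ph n dx"

lemma phin_1: "phin ph 1 t = t"
  by (simp add: phin_def)

lemma sum_lessThan_split_0: "1 \<le> (n::nat) \<Longrightarrow> (\<Sum>i<n. f i) = f 0 + (\<Sum>i\<in>{1..<n}. f i)"
  by (simp add: atLeast0LessThan[symmetric] sum.atLeast_Suc_lessThan)

lemma dd_gam_expansion:
  assumes "is_free_DP_structure g" "is_DP_derivation_d g ph" "1 \<le> n"
  shows "omeq (dd (gam n)) (\<Sum>i<n. tact (gam i) (phi_dx ph (n - i)))"
proof -
  have g_gam_1: "g k (gam 1) = gam k" if "1 \<le> k" for k
    using assms(1) that by (simp add: is_free_DP_structure_def)
  have "gam 1 \<in> dpA"
    by (simp add: dpA_def gam_def lookup_single)
  then have "omeq (dd (g n (gam 1)))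
      (phi_dx ph n + (\<Sum>i\<in>{1..<n}. tact (g i (gam 1)) (phi_dx ph (n - i))))"
    using assms(2,3) unfolding is_DP_derivation_d_def by blast
  moreover have "(\<Sum>i\<in>{1..<n}. tact (g i (gam 1)) (phi_dx ph (n - i))) =
      (\<Sum>i\<in>{1..<n}. tact (gam i) (phi_dx ph (n - i)))"
    by (intro sum.cong refl) (metis atLeastLessThan_iff g_gam_1)
  ultimately show ?thesis
    using assms(3) unfolding g_gam_1[OF assms(3)] by (simp add: sum_lessThan_split_0)
qed

lemma phi_dx_expansion:
  assumes "is_free_DP_structure g" "is_DP_derivation_d g ph" "1 \<le> n"
  shows "omeq (phi_dx ph n) (\<Sum>i<n. tsmult ((-1) ^ i) (tact (gam i) (dd (gam (n - i)))))"
proof -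
  define h where "h i j = tsmult ((-1) ^ i * of_nat ((i + j) choose i))
      (tact (gam (i + j)) (phi_dx ph (n - (i + j))))" for i j
  have "omeq (\<Sum>i<n. tsmult ((-1) ^ i) (tact (gam i) (dd (gam (n - i)))))
      (\<Sum>i<n. tsmult ((-1) ^ i) (tact (gam i) (\<Sum>j<n - i. tact (gam j) (phi_dx ph (n - i - j)))))"
    using assms by (intro omeq_sum omeq_tsmult omeq_tact dd_gam_expansion) auto
  also have "\<dots> = (\<Sum>i<n. \<Sum>j<n - i. h i j)"
    by (simp add: h_def tact_sum_right additive.sum[OF additive_tsmult] tact_tact dpmult_gam_gam
        tact_dpsmult tsmult_tsmult)
  also have "\<dots> = (\<Sum>(i, j)\<in>{(i, j). i + j < n}. h i j)"
    by (subst sum.Sigma) (auto intro!: sum.cong)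
  also have "\<dots> = (\<Sum>k<n. \<Sum>i\<le>k. h i (k - i))"
    by (rule sum.triangle_reindex)
  also have "\<dots> = (\<Sum>k<n. tsmult (\<Sum>i\<le>k. (-1) ^ i * of_nat (k choose i))
      (tact (gam k) (phi_dx ph (n - k))))"
    by (simp add: h_def additive.sum[OF additive_tsmult_scalar])
  also have "\<dots> = phi_dx ph n"
    using assms(3) by (simp add: sum_lessThan_split_0 choose_alternating_sum)
  finally show ?thesis
    by (rule omeq_sym)
qed

section \<open>Detecting elements of \<open>\<Omega>\<close> by contractions\<close>

definition contraction :: "nat \<Rightarrow> 'r::comm_ring_1 ten \<Rightarrow> 'r dpa" where
  "contraction q = pm_extend (\<lambda>(i, j) v.
     if q \<le> j then dpmult (gam i) (Poly_Mapping.single (j - q) v) else 0)"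

lemma additive_contraction: "additive (contraction q)"
  unfolding contraction_def
  by (intro additive_pm_extend)
    (auto simp: additive_def single_add additive.add[OF additive_dpmult_right])

lemma contraction_single [simp]:
  "contraction q (Poly_Mapping.single (i, j) v) =
   (if q \<le> j then Poly_Mapping.single (i + j - q) (of_nat ((i + j - q) choose i) * v) else 0)"
  by (simp add: contraction_def pm_extend_single gam_def)

lemma contraction_tsmult: "contraction q (tsmult r t) = dpsmult r (contraction q t)"
  by (rule additive_eq_on_singles[OF additive_compose[OF additive_contraction additive_tsmult]
        additive_compose[OF additive_dpsmult additive_contraction]])
    (auto simp: ac_simps)

lemma contraction_tact:
  fixes c :: "'r::comm_ring_1 dpa"
  shows "contraction q (tact c t) = dpmult c (contraction q t)"
proof (rule biadditive_eq_on_singles[where F = "\<lambda>c t. contraction q (tact c t)"])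
  show "biadditive (\<lambda>c t. contraction q (tact c t))"
    by (rule biadditive_compose_left[OF additive_contraction biadditive_tact])
  show "biadditive (\<lambda>c t. dpmult c (contraction q t))"
    by (rule biadditive_compose_right[OF biadditive_dpmult additive_id additive_contraction])
  fix m w and k :: "nat \<times> nat" and v :: 'r
  obtain i j where k: "k = (i, j)" by fastforce
  show "contraction q (tact (Poly_Mapping.single m w) (Poly_Mapping.single k v)) =
      dpmult (Poly_Mapping.single m w) (contraction q (Poly_Mapping.single k v))"
  proof (cases "q \<le> j")
    case True
    then obtain l where l: "j = q + l" using le_Suc_ex by blast
    have "of_nat ((m + i + l) choose (m + i)) * of_nat ((m + i) choose m) =
        (of_nat ((m + i + l) choose m) * of_nat ((i + l) choose i) :: 'r)"
      unfolding of_nat_mult[symmetric] multinomial_choose_commute ..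
    then show ?thesis
      by (simp add: k l add.assoc) (simp add: ac_simps)
  qed (simp add: k)
qed

definition dp_divisible :: "nat \<Rightarrow> 'r::comm_ring_1 dpa \<Rightarrow> bool" where
  "dp_divisible N a \<longleftrightarrow> (\<exists>c. a = dpsmult (of_nat N) c)"

lemma dp_divisible_zero [simp]: "dp_divisible N 0"
  unfolding dp_divisible_def by (metis dpsmult_zero)

lemma dp_divisible_add: "dp_divisible N a \<Longrightarrow> dp_divisible N b \<Longrightarrow> dp_divisible N (a + b)"
  unfolding dp_divisible_def by (metis additive.add[OF additive_dpsmult])

lemma dp_divisible_diff: "dp_divisible N a \<Longrightarrow> dp_divisible N b \<Longrightarrow> dp_divisible N (a - b)"
  unfolding dp_divisible_def by (metis additive.diff[OF additive_dpsmult])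

lemma dp_divisible_sum: "(\<And>x. x \<in> S \<Longrightarrow> dp_divisible N (f x)) \<Longrightarrow> dp_divisible N (sum f S)"
  by (induction S rule: infinite_finite_induct) (simp_all add: dp_divisible_add)

lemma dp_divisible_dpsmult: "dp_divisible N a \<Longrightarrow> dp_divisible N (dpsmult r a)"
  unfolding dp_divisible_def by (metis dpsmult_dpsmult mult.commute)

lemma dp_divisible_dpmult: "dp_divisible N a \<Longrightarrow> dp_divisible N (dpmult c a)"
  unfolding dp_divisible_def by (metis dpmult_dpsmult_right)

lemma dp_divisible_single: "dp_divisible N (Poly_Mapping.single k (of_nat N * y))"
  unfolding dp_divisible_def by (metis dpsmult_single)

lemma dp_divisible_0_iff: "dp_divisible 0 a \<longleftrightarrow> a = 0"
  unfolding dp_divisible_def by simp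

lemma dp_divisible_additive_image:
  assumes "additive F"
    and "\<And>k. k \<in> Poly_Mapping.keys a \<Longrightarrow> dp_divisible N (F (Poly_Mapping.single k (Poly_Mapping.lookup a k)))"
  shows "dp_divisible N (F a)"
proof -
  have "F a = (\<Sum>k\<in>Poly_Mapping.keys a. F (Poly_Mapping.single k (Poly_Mapping.lookup a k)))"
    by (subst (1) sum_single_lookup[symmetric, of a]) (rule additive.sum[OF assms(1)])
  then show ?thesis
    using assms(2) by (simp add: dp_divisible_sum)
qed

text \<open>This says that \<open>\<partial>\<^sub>q : \<gamma>\<^sub>j \<mapsto> \<gamma>\<^bsub>j-q\<^esub>\<close> satisfies the Leibniz rule
  \<open>\<partial>\<^sub>q(\<gamma>\<^sub>i\<gamma>\<^sub>j) \<equiv> \<gamma>\<^sub>i \<partial>\<^sub>q\<gamma>\<^sub>j + \<gamma>\<^sub>j \<partial>\<^sub>q\<gamma>\<^sub>i\<close> modulo \<open>N\<close>, which is exactly what makes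
  \<open>contraction q\<close> kill the relations of \<open>\<Omega>\<close> modulo \<open>N\<close>.\<close>

definition shift_is_derivation_mod :: "nat \<Rightarrow> nat \<Rightarrow> bool" where
  "shift_is_derivation_mod q N \<longleftrightarrow> (\<forall>i j. 1 \<le> i \<longrightarrow> 1 \<le> j \<longrightarrow> q \<le> i + j \<longrightarrow>
     [(i + j) choose i = (if q \<le> j then (i + j - q) choose i else 0) +
                         (if q \<le> i then (i + j - q) choose j else 0)] (mod N))"

lemma shift_is_derivation_mod_1_0: "shift_is_derivation_mod 1 0"
  unfolding shift_is_derivation_mod_def
proof (intro allI impI)
  fix i j :: nat
  assume ij: "1 \<le> i" "1 \<le> j" "1 \<le> i + j"
  have "(i + j) choose i = ((i + j - 1) choose (i - 1)) + ((i + j - 1) choose i)"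
    using ij by (intro choose_reduce_nat) auto
  moreover have "(i + j - 1) choose (i - 1) = (i + j - 1) choose j"
    using ij binomial_symmetric[of "i - 1" "i + j - 1"] by auto
  ultimately show "[(i + j) choose i = (if 1 \<le> j then (i + j - 1) choose i else 0) +
      (if 1 \<le> i then (i + j - 1) choose j else 0)] (mod 0)"
    using ij by simp
qed

lemma prime_dvd_choose_prime_power:
  assumes p: "prime (p::nat)" and k: "0 < k" "k < p ^ e"
  shows "p dvd (p ^ e choose k)"
proof (rule ccontr)
  assume "\<not> p dvd (p ^ e choose k)"
  then have "coprime (p ^ e) (p ^ e choose k)"
    using prime_imp_coprime[OF p] by simp
  moreover have "p ^ e dvd k * (p ^ e choose k)"
    using times_binomial_minus1_eq[OF k(1), of "p ^ e"] by simp
  ultimately have "p ^ e dvd k"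
    by (simp add: coprime_dvd_mult_left_iff)
  then show False
    using k by (auto dest: dvd_imp_le)
qed

lemma choose_prime_power_add_cong:
  assumes p: "prime p"
  shows "[(p ^ e + s) choose i = (s choose i) + (if p ^ e \<le> i then s choose (i - p ^ e) else 0)] (mod p)"
proof -
  define q where "q = p ^ e"
  have "q \<noteq> 0"
    using p unfolding q_def by (simp add: prime_gt_0_nat)
  have "(q + s) choose i = (\<Sum>k\<le>i. (q choose k) * (s choose (i - k)))"
    by (rule vandermonde[symmetric])
  also have "[\<dots> = (\<Sum>k\<le>i. (if k = 0 then s choose i else 0) + (if k = q then s choose (i - q) else 0))] (mod p)"
  proof (rule cong_sum)
    fix k
    show "[(q choose k) * (s choose (i - k)) =
        (if k = 0 then s choose i else 0) + (if k = q then s choose (i - q) else 0)] (mod p)"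
    proof (cases "k = 0 \<or> k = q \<or> k > q")
      case True
      then show ?thesis using \<open>q \<noteq> 0\<close> by (auto simp: binomial_eq_0)
    next
      case False
      then have "p dvd (q choose k)"
        unfolding q_def using prime_dvd_choose_prime_power[OF p, of k e] by auto
      then show ?thesis
        using False by (simp add: cong_0_iff)
    qed
  qed
  also have "(\<Sum>k\<le>i. (if k = 0 then s choose i else 0) + (if k = q then s choose (i - q) else 0)) =
      (s choose i) + (if q \<le> i then s choose (i - q) else 0)"
    by (simp add: sum.distrib)
  finally show ?thesis
    unfolding q_def .
qed

lemma shift_is_derivation_mod_prime_power:
  assumes "prime p"
  shows "shift_is_derivation_mod (p ^ e) p"
  unfolding shift_is_derivation_mod_def
proof (intro allI impI)
  fix i j :: nat
  assume "1 \<le> i" "1 \<le> j" "p ^ e \<le> i + j"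
  then obtain s where n: "i + j = p ^ e + s"
    using le_Suc_ex by blast
  have "(if p ^ e \<le> j then (i + j - p ^ e) choose i else 0) = s choose i"
    using n by (auto intro: binomial_eq_0)
  moreover have "(if p ^ e \<le> i then (i + j - p ^ e) choose j else 0) =
      (if p ^ e \<le> i then s choose (i - p ^ e) else 0)"
  proof -
    have "s choose (i - p ^ e) = s choose j" if "p ^ e \<le> i"
    proof -
      have "i - p ^ e \<le> s" "s - (i - p ^ e) = j"
        using n that by arith+
      then show ?thesis
        using binomial_symmetric[of "i - p ^ e" s] by simp
    qed
    then show ?thesis
      using n by simp
  qed
  ultimately show "[(i + j) choose i = (if p ^ e \<le> j then (i + j - p ^ e) choose i else 0) +
      (if p ^ e \<le> i then (i + j - p ^ e) choose j else 0)] (mod p)"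
    using choose_prime_power_add_cong[OF assms, of e s i] unfolding n by simp
qed

abbreviation relation_gen :: "'r::comm_ring_1 dpa \<Rightarrow> 'r dpa \<Rightarrow> 'r ten" where
  "relation_gen a b \<equiv> ten a b - ten (gam 0) (dpmult a b) + ten b a"

lemma contraction_relation_gen_single:
  fixes x y :: "'r::comm_ring_1"
  assumes der: "shift_is_derivation_mod q N" and ij: "1 \<le> i" "1 \<le> j"
  shows "dp_divisible N (contraction q (relation_gen (Poly_Mapping.single i x) (Poly_Mapping.single j y)))"
proof (cases "q \<le> i + j")
  case False
  then show ?thesis
    by (simp add: gam_def additive.add[OF additive_contraction] additive.diff[OF additive_contraction])
next
  case True
  define s where "s = i + j - q"
  define A where "A = (if q \<le> j then s choose i else 0)"
  define B where "B = (i + j) choose i"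
  define C where "C = (if q \<le> i then s choose j else 0)"
  have "[B = A + C] (mod N)"
    using der ij True unfolding shift_is_derivation_mod_def A_def B_def C_def s_def by blast
  then obtain k1 k2 where "A + C + k1 * N = B + k2 * N"
    unfolding cong_iff_lin_nat by (metis add.commute)
  then have "(of_nat (A + C + k1 * N) :: 'r) = of_nat (B + k2 * N)"
    by simp
  then have coeff: "of_nat A + of_nat C - of_nat B = (of_nat N * (of_nat k2 - of_nat k1) :: 'r)"
    by (simp add: algebra_simps)
  have "contraction q (relation_gen (Poly_Mapping.single i x) (Poly_Mapping.single j y)) =
      Poly_Mapping.single s (x * y * of_nat A) - Poly_Mapping.single s (x * y * of_nat B)
        + Poly_Mapping.single s (x * y * of_nat C)"
    using True
    by (simp add: gam_def additive.add[OF additive_contraction] additive.diff[OF additive_contraction]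
        s_def A_def B_def C_def ac_simps)
  also have "\<dots> = Poly_Mapping.single s (x * y * (of_nat A + of_nat C - of_nat B))"
    by (simp flip: single_add single_diff add: algebra_simps)
  also have "\<dots> = Poly_Mapping.single s (of_nat N * (x * y * (of_nat k2 - of_nat k1)))"
    by (simp only: coeff ac_simps)
  finally show ?thesis
    by (simp add: dp_divisible_single)
qed

lemma dpA_keys_ge_1: "a \<in> dpA \<Longrightarrow> k \<in> Poly_Mapping.keys a \<Longrightarrow> 1 \<le> k"
  unfolding dpA_def in_keys_iff by (cases k) auto

lemma dp_divisible_contraction_Krel:
  assumes der: "shift_is_derivation_mod q N"
  shows "t \<in> Krel \<Longrightarrow> dp_divisible N (contraction q t)"
proof (induction rule: Krel.induct)
  case Krel_zero
  then show ?case by (simp add: additive.zero[OF additive_contraction])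
next
  case (Krel_add s t)
  then show ?case by (simp add: additive.add[OF additive_contraction] dp_divisible_add)
next
  case (Krel_smult t r)
  then show ?case by (simp add: contraction_tsmult dp_divisible_dpsmult)
next
  case (Krel_act t c)
  then show ?case by (simp add: contraction_tact dp_divisible_dpmult)
next
  case (Krel_gen a b)
  have additive_left: "additive (\<lambda>a. contraction q (relation_gen a b))" for b :: "'a dpa"
    by standard (simp add: additive.add[OF additive_contraction] additive.diff[OF additive_contraction]
        additive.add[OF additive_ten_left] additive.add[OF additive_ten_right]
        additive.add[OF additive_dpmult_left])
  have additive_right: "additive (\<lambda>b. contraction q (relation_gen a b))" for a :: "'a dpa"
    by standard (simp add: additive.add[OF additive_contraction] additive.diff[OF additive_contraction]
        additive.add[OF additive_ten_left] additive.add[OF additive_ten_right]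
        additive.add[OF additive_dpmult_right])
  show ?case
  proof (rule dp_divisible_additive_image[OF additive_left])
    fix i assume i: "i \<in> Poly_Mapping.keys a"
    show "dp_divisible N (contraction q (relation_gen (Poly_Mapping.single i (Poly_Mapping.lookup a i)) b))"
    proof (rule dp_divisible_additive_image[OF additive_right])
      fix j assume j: "j \<in> Poly_Mapping.keys b"
      show "dp_divisible N (contraction q (relation_gen (Poly_Mapping.single i (Poly_Mapping.lookup a i))
          (Poly_Mapping.single j (Poly_Mapping.lookup b j))))"
        using Krel_gen i j by (intro contraction_relation_gen_single[OF der] dpA_keys_ge_1)
    qed
  qed
qed

lemma dp_divisible_contraction_omeq:
  "shift_is_derivation_mod q N \<Longrightarrow> omeq s t \<Longrightarrow> dp_divisible N (contraction q s - contraction q t)"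
  unfolding omeq_def using dp_divisible_contraction_Krel[of q N "s - t"]
  by (simp add: additive.diff[OF additive_contraction])

lemma contraction_alternating_sum:
  assumes "1 \<le> q" "1 \<le> n"
  shows "contraction q (\<Sum>i<n. tsmult ((-1) ^ i) (tact (gam i) (dd (gam (n - i))))) =
      (if q = n then gam 0 else (0 :: 'r::comm_ring_1 dpa))"
proof -
  have "contraction q (\<Sum>i<n. tsmult ((-1) ^ i) (tact (gam i) (dd (gam (n - i))))) =
      (\<Sum>i<n. Poly_Mapping.single (n - q)
        (if q \<le> n - i then (-1) ^ i * of_nat ((n - q) choose i) else (0::'r)))"
    unfolding additive.sum[OF additive_contraction]
    by (rule sum.cong) (auto simp: tact_gam_dd_gam contraction_tsmult mult.commute)
  also have "\<dots> = Poly_Mapping.single (n - q)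
      (\<Sum>i<n. if q \<le> n - i then (-1) ^ i * of_nat ((n - q) choose i) else 0)"
    by (rule additive.sum[where f = "Poly_Mapping.single (n - q)", symmetric])
      (simp add: additive_def single_add)
  also have "\<dots> = (if q = n then gam 0 else 0)"
  proof (cases "q \<le> n")
    case True
    have "(\<Sum>i<n. if q \<le> n - i then (-1) ^ i * of_nat ((n - q) choose i) else 0) =
        (\<Sum>i\<le>n - q. (-1) ^ i * of_nat ((n - q) choose i) :: 'r)"
      using assms True by (intro sum.mono_neutral_cong_right) auto
    then show ?thesis
      using True choose_alternating_sum[of "n - q", where 'a = 'r] by (auto simp: gam_def)
  next
    case False
    then have "(\<Sum>i<n. if q \<le> n - i then (-1) ^ i * of_nat ((n - q) choose i) else 0) = (0::'r)"
      by (intro sum.neutral) auto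
    with False show ?thesis by simp
  qed
  finally show ?thesis .
qed

lemma dp_divisible_contraction_phi_dx:
  assumes "is_free_DP_structure g" "is_DP_derivation_d g ph" "shift_is_derivation_mod q N"
    and "1 \<le> q" "1 \<le> n"
  shows "dp_divisible N (contraction q (phi_dx ph n) - (if q = n then gam 0 else 0))"
  using dp_divisible_contraction_omeq[OF assms(3) phi_dx_expansion[OF assms(1,2,5)]]
  by (simp add: contraction_alternating_sum[OF assms(4,5)])

lemma dp_divisible_contraction_tact_phi_dx:
  assumes "is_free_DP_structure g" "is_DP_derivation_d g ph" "shift_is_derivation_mod q N"
    and "1 \<le> q" "1 \<le> n"
  shows "dp_divisible N (contraction q (tact c (phi_dx ph n)) - (if q = n then c else 0))"
proof -
  have "contraction q (tact c (phi_dx ph n)) - (if q = n then c else 0) =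
      dpmult c (contraction q (phi_dx ph n) - (if q = n then gam 0 else 0))"
    by (simp add: contraction_tact additive.diff[OF additive_dpmult_right])
  then show ?thesis
    using dp_divisible_dpmult[OF dp_divisible_contraction_phi_dx[OF assms]] by simp
qed

section \<open>Normal forms in \<open>\<Omega>\<close>\<close>

abbreviation prime_power_indices :: "(nat \<times> nat) set" where
  "prime_power_indices \<equiv> {(p, e). prime p \<and> 1 \<le> e}"

abbreviation normal_form ::
  "(nat \<Rightarrow> 'r::comm_ring_1 ten \<Rightarrow> 'r ten) \<Rightarrow> 'r dpa \<Rightarrow> (nat \<Rightarrow> nat \<Rightarrow> 'r dpa) \<Rightarrow> (nat \<times> nat) set \<Rightarrow> 'r ten"
where
  "normal_form ph a b S \<equiv> tact a dx + (\<Sum>(p, e)\<in>S. tact (b p e) (phi_dx ph (p ^ e)))"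

lemma prime_power_ge_1: "prime (p::nat) \<Longrightarrow> 1 \<le> p ^ e"
  using prime_gt_0_nat by (simp add: Suc_le_eq)

lemma prime_power_neq_1: "prime (p::nat) \<Longrightarrow> 1 \<le> e \<Longrightarrow> p ^ e \<noteq> 1"
  using prime_gt_1_nat[of p] by simp

lemma dp_divisible_contraction_normal_form:
  assumes "is_free_DP_structure g" "is_DP_derivation_d g ph" "shift_is_derivation_mod q N"
    and "1 \<le> q" "S \<subseteq> prime_power_indices"
  shows "dp_divisible N (contraction q (normal_form ph a b S) -
      ((if q = 1 then a else 0) + (\<Sum>(p, e)\<in>S. if q = p ^ e then b p e else 0)))"
proof -
  have "contraction q (normal_form ph a b S) -
      ((if q = 1 then a else 0) + (\<Sum>(p, e)\<in>S. if q = p ^ e then b p e else 0)) =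
      (contraction q (tact a dx) - (if q = 1 then a else 0)) +
      (\<Sum>(p, e)\<in>S. contraction q (tact (b p e) (phi_dx ph (p ^ e))) - (if q = p ^ e then b p e else 0))"
    by (simp add: additive.add[OF additive_contraction] additive.sum[OF additive_contraction]
        split_def sum_subtractf)
  also have "dp_divisible N \<dots>"
  proof (intro dp_divisible_add dp_divisible_sum)
    show "dp_divisible N (contraction q (tact a dx) - (if q = 1 then a else 0))"
      using dp_divisible_contraction_tact_phi_dx[OF assms(1-4) order_refl, unfolded phin_1] by simp
    fix x assume "x \<in> S"
    with assms(5) obtain p e where x: "x = (p, e)" "prime p" "1 \<le> e" by blast
    show "dp_divisible N (case x of (p, e) \<Rightarrow>
        contraction q (tact (b p e) (phi_dx ph (p ^ e))) - (if q = p ^ e then b p e else 0))"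
      using dp_divisible_contraction_tact_phi_dx[OF assms(1-4) prime_power_ge_1[OF x(2)]]
      by (simp add: x(1))
  qed
  finally show ?thesis .
qed

lemma sum_if_prime_power_eq_1:
  assumes "S \<subseteq> prime_power_indices"
  shows "(\<Sum>(p, e)\<in>S. if 1 = p ^ e then f p e else 0) = 0"
proof (intro sum.neutral ballI)
  fix x assume "x \<in> S"
  with assms obtain p e where x: "x = (p, e)" "prime p" "1 \<le> e" by blast
  then have "1 \<noteq> p ^ e"
    using prime_power_neq_1 by metis
  then show "(case x of (p, e) \<Rightarrow> if 1 = p ^ e then f p e else 0) = 0"
    by (simp add: x(1))
qed

lemma sum_if_prime_power_eq:
  assumes "finite S" "S \<subseteq> prime_power_indices" "(p, e) \<in> S"
  shows "(\<Sum>(p', e')\<in>S. if p ^ e = p' ^ e' then f p' e' else 0) = f p e"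
proof -
  have "(\<Sum>(p', e')\<in>S. if p ^ e = p' ^ e' then f p' e' else 0) = (\<Sum>x\<in>S. if x = (p, e) then f p e else 0)"
  proof (intro sum.cong refl)
    fix x assume "x \<in> S"
    with assms(2) obtain p' e' where "x = (p', e')" "prime p'" "1 \<le> e'" by blast
    with assms(2,3) show "(case x of (p', e') \<Rightarrow> if p ^ e = p' ^ e' then f p' e' else 0) =
        (if x = (p, e) then f p e else 0)"
      by (auto simp: prime_power_inj'')
  qed
  also have "\<dots> = f p e"
    using assms(1,3) by simp
  finally show ?thesis .
qed

lemma normal_form_omeq_0_imp:
  assumes "is_free_DP_structure g" "is_DP_derivation_d g ph"
    and "finite S" "S \<subseteq> prime_power_indices" "omeq (normal_form ph a b S) 0"
  shows "a = 0 \<and> (\<forall>(p, e)\<in>S. dp_divisible p (b p e))"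
proof -
  have coeffs: "dp_divisible N ((if q = 1 then a else 0) + (\<Sum>(p, e)\<in>S. if q = p ^ e then b p e else 0))"
    if "shift_is_derivation_mod q N" "1 \<le> q" for q N
  proof -
    have "dp_divisible N (contraction q (normal_form ph a b S))"
      using dp_divisible_contraction_omeq[OF that(1) assms(5)]
      by (simp add: additive.zero[OF additive_contraction])
    from dp_divisible_diff[OF this dp_divisible_contraction_normal_form[OF assms(1,2) that assms(4),
          where a = a and b = b]]
    show ?thesis by simp
  qed
  have "(\<Sum>(p, e)\<in>S. if 1 = p ^ e then b p e else 0) = 0"
    using assms(4) by (rule sum_if_prime_power_eq_1)
  then have "a = 0"
    using coeffs[OF shift_is_derivation_mod_1_0] by (simp add: dp_divisible_0_iff)
  moreover have "dp_divisible p (b p e)" if pe: "(p, e) \<in> S" for p e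
  proof -
    have p: "prime p" "1 \<le> e"
      using assms(4) pe by auto
    show ?thesis
      using coeffs[OF shift_is_derivation_mod_prime_power[OF p(1), of e] prime_power_ge_1[OF p(1), of e]]
        sum_if_prime_power_eq[OF assms(3,4) pe, of b] prime_power_neq_1[OF p] by simp
  qed
  ultimately show ?thesis by blast
qed

lemma phin_prime_power:
  assumes "prime p" "1 \<le> e"
  shows "phin ph (p ^ e) t = (ph p ^^ e) t"
  using assms prime_power_neq_1[OF assms]
  by (simp add: phin_def aprimedivisor_prime_power primepow_power_iff_nat prime_imp_prime_elem)

lemma tact_dpsmult_phi_dx_omeq_0:
  assumes "is_UA_structure ph" "prime p" "1 \<le> e"
  shows "omeq (tact (dpsmult (of_nat p) c) (phi_dx ph (p ^ e))) 0"
proof -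
  have ph_p: "\<forall>t\<in>tenspace. ph p t \<in> tenspace" "\<forall>t\<in>tenspace. omeq (tsmult (of_nat p) (ph p t)) 0"
    using assms(1,2) unfolding is_UA_structure_def by blast+
  obtain e' where e_Suc: "e = Suc e'"
    using assms(3) by (cases e) auto
  have "(ph p ^^ e') dx \<in> tenspace"
    using ph_p(1) by (induction e') (simp_all add: dd_gam tenspace_def)
  then have "omeq (tact c (tsmult (of_nat p) (ph p ((ph p ^^ e') dx)))) (tact c 0)"
    using ph_p(2) by (intro omeq_tact) blast
  then show ?thesis
    unfolding phin_prime_power[OF assms(2,3)] unfolding e_Suc by (simp add: tact_dpsmult tact_tsmult)
qed

lemma tact_phi_dx_omeq_0_iff:
  assumes "is_free_DP_structure g" "is_DP_derivation_d g ph" "is_UA_structure ph"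
    and "prime p" "1 \<le> e"
  shows "omeq (tact c (phi_dx ph (p ^ e))) 0 \<longleftrightarrow> dp_divisible p c"
proof
  assume "omeq (tact c (phi_dx ph (p ^ e))) 0"
  then have "omeq (normal_form ph 0 (\<lambda>_ _. c) {(p, e)}) 0"
    by simp
  from normal_form_omeq_0_imp[OF assms(1,2) _ _ this] assms(4,5)
  show "dp_divisible p c"
    by simp
next
  assume "dp_divisible p c"
  then show "omeq (tact c (phi_dx ph (p ^ e))) 0"
    unfolding dp_divisible_def using tact_dpsmult_phi_dx_omeq_0[OF assms(3-5)] by blast
qed

lemma normal_form_omeq_0_imp_summands_omeq_0:
  assumes "is_free_DP_structure g" "is_DP_derivation_d g ph" "is_UA_structure ph"
    and "finite S" "S \<subseteq> prime_power_indices" "omeq (normal_form ph a b S) 0"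
  shows "a = 0 \<and> (\<forall>(p, e)\<in>S. omeq (tact (b p e) (phi_dx ph (p ^ e))) 0)"
proof -
  have "omeq (tact (b p e) (phi_dx ph (p ^ e))) 0" if pe: "(p, e) \<in> S" for p e
  proof -
    have "prime p" "1 \<le> e" "dp_divisible p (b p e)"
      using normal_form_omeq_0_imp[OF assms(1,2,4-6)] pe assms(5) by auto
    then show ?thesis
      using tact_phi_dx_omeq_0_iff[OF assms(1-3)] by blast
  qed
  then show ?thesis
    using normal_form_omeq_0_imp[OF assms(1,2,4-6)] by blast
qed

definition has_normal_form :: "(nat \<Rightarrow> 'r::comm_ring_1 ten \<Rightarrow> 'r ten) \<Rightarrow> 'r ten \<Rightarrow> bool" where
  "has_normal_form ph t \<longleftrightarrow>
     (\<exists>a b S. finite S \<and> S \<subseteq> prime_power_indices \<and> omeq t (normal_form ph a b S))"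

lemma sum_tact_phi_dx_extend:
  assumes "finite T" "S \<subseteq> T"
  shows "(\<Sum>(p, e)\<in>T. tact (if (p, e) \<in> S then b p e else 0) (phi_dx ph (p ^ e))) =
      (\<Sum>(p, e)\<in>S. tact (b p e) (phi_dx ph (p ^ e)))"
  using assms by (intro sum.mono_neutral_cong_right) auto

lemma has_normal_form_omeq: "omeq s t \<Longrightarrow> has_normal_form ph t \<Longrightarrow> has_normal_form ph s"
  unfolding has_normal_form_def by (meson omeq_trans)

lemma has_normal_form_zero: "has_normal_form ph 0"
  unfolding has_normal_form_def by (rule exI[of _ 0], rule exI[of _ "\<lambda>_ _. 0"]) auto

lemma has_normal_form_add:
  assumes "has_normal_form ph s" "has_normal_form ph t"
  shows "has_normal_form ph (s + t)"
proof -
  obtain a b S where S: "finite S" "S \<subseteq> prime_power_indices" "omeq s (normal_form ph a b S)"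
    using assms(1) unfolding has_normal_form_def by blast
  obtain a' b' S' where S': "finite S'" "S' \<subseteq> prime_power_indices" "omeq t (normal_form ph a' b' S')"
    using assms(2) unfolding has_normal_form_def by blast
  define b'' where "b'' p e = (if (p, e) \<in> S then b p e else 0) + (if (p, e) \<in> S' then b' p e else 0)" for p e
  have "(\<Sum>(p, e)\<in>S \<union> S'. tact (b'' p e) (phi_dx ph (p ^ e))) =
      (\<Sum>(p, e)\<in>S \<union> S'. tact (if (p, e) \<in> S then b p e else 0) (phi_dx ph (p ^ e))) +
      (\<Sum>(p, e)\<in>S \<union> S'. tact (if (p, e) \<in> S' then b' p e else 0) (phi_dx ph (p ^ e)))"
    unfolding sum.distrib[symmetric] by (intro sum.cong refl) (auto simp: b''_def tact_add_left)
  also have "\<dots> = (\<Sum>(p, e)\<in>S. tact (b p e) (phi_dx ph (p ^ e))) +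
      (\<Sum>(p, e)\<in>S'. tact (b' p e) (phi_dx ph (p ^ e)))"
    using sum_tact_phi_dx_extend[of "S \<union> S'" S b ph] sum_tact_phi_dx_extend[of "S \<union> S'" S' b' ph]
      S(1) S'(1) by simp
  finally have "normal_form ph (a + a') b'' (S \<union> S') = normal_form ph a b S + normal_form ph a' b' S'"
    by (simp add: tact_add_left ac_simps)
  then have "omeq (s + t) (normal_form ph (a + a') b'' (S \<union> S'))"
    using omeq_add[OF S(3) S'(3)] by simp
  then show ?thesis
    unfolding has_normal_form_def using S(1,2) S'(1,2)
    by (intro exI[of _ "a + a'"] exI[of _ b''] exI[of _ "S \<union> S'"]) simp
qed

lemma has_normal_form_sum: "(\<And>x. x \<in> A \<Longrightarrow> has_normal_form ph (f x)) \<Longrightarrow> has_normal_form ph (sum f A)"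
  by (induction A rule: infinite_finite_induct) (simp_all add: has_normal_form_zero has_normal_form_add)

lemma has_normal_form_tact_phi_dx: "has_normal_form ph (tact c (phi_dx ph m))"
proof (cases "m = 1")
  case True
  then show ?thesis unfolding has_normal_form_def
    by (intro exI[of _ c] exI[of _ "\<lambda>_ _. 0"] exI[of _ "{}"]) (simp add: phin_def)
next
  case m: False
  show ?thesis
  proof (cases "primepow m")
    case True
    then obtain p k where "prime p" "1 \<le> k" "m = p ^ k"
      unfolding primepow_def by (auto simp: Suc_le_eq)
    then show ?thesis unfolding has_normal_form_def
      by (intro exI[of _ 0] exI[of _ "\<lambda>_ _. c"] exI[of _ "{(p, k)}"]) simp
  next
    case False
    with m show ?thesis
      by (simp add: phin_def has_normal_form_zero)
  qed
qed

lemma has_normal_form_single: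
  assumes "is_free_DP_structure g" "is_DP_derivation_d g ph" "1 \<le> j"
  shows "has_normal_form ph (Poly_Mapping.single (i, j) v)"
proof -
  let ?c = "dpsmult v (gam i)"
  have "Poly_Mapping.single (i, j) v = tact ?c (dd (gam j))"
    by (simp add: tact_dpsmult tact_gam_dd_gam)
  moreover have "omeq (tact ?c (dd (gam j))) (\<Sum>l<j. tact (dpmult ?c (gam l)) (phi_dx ph (j - l)))"
    using omeq_tact[OF dd_gam_expansion[OF assms]] by (simp add: tact_sum_right tact_tact)
  moreover have "has_normal_form ph (\<Sum>l<j. tact (dpmult ?c (gam l)) (phi_dx ph (j - l)))"
    by (intro has_normal_form_sum has_normal_form_tact_phi_dx)
  ultimately show ?thesis
    by (simp add: has_normal_form_omeq)
qed

lemma has_normal_form_tenspace: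
  assumes "is_free_DP_structure g" "is_DP_derivation_d g ph" "t \<in> tenspace"
  shows "has_normal_form ph t"
proof -
  have "has_normal_form ph (\<Sum>k\<in>Poly_Mapping.keys t. Poly_Mapping.single k (Poly_Mapping.lookup t k))"
  proof (intro has_normal_form_sum)
    fix k assume "k \<in> Poly_Mapping.keys t"
    moreover obtain i j where "k = (i, j)" by fastforce
    ultimately show "has_normal_form ph (Poly_Mapping.single k (Poly_Mapping.lookup t k))"
      using assms(3) has_normal_form_single[OF assms(1,2)] unfolding tenspace_def by auto
  qed
  then show ?thesis
    by (simp only: sum_single_lookup)
qed

theorem mainTheorem8:
  fixes g :: "nat \<Rightarrow> 'r::comm_ring_1 dpa \<Rightarrow> 'r dpa"
    and ph :: "nat \<Rightarrow> 'r ten \<Rightarrow> 'r ten"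
  assumes free: "is_free_DP_structure g"
    and UA: "is_UA_structure ph"
    and der: "is_DP_derivation_d g ph"
  shows "(\<forall>n\<ge>1. omeq (dd (gam n))
              (\<Sum>i<n. tact (gam i) (phin ph (n - i) (dd (gam 1)))))
       \<and> (\<forall>n\<ge>1. omeq (phin ph n (dd (gam 1)))
              (\<Sum>i<n. tsmult ((-1) ^ i) (tact (gam i) (dd (gam (n - i))))))
       \<and> (\<forall>t\<in>tenspace. \<exists>a b S. finite S \<and> S \<subseteq> {(p, e). prime p \<and> 1 \<le> e} \<and>
              omeq t (tact a (dd (gam 1)) +
                      (\<Sum>(p, e)\<in>S. tact (b p e) (phin ph (p ^ e) (dd (gam 1))))))
       \<and> (\<forall>a b S. finite S \<and> S \<subseteq> {(p, e). prime p \<and> 1 \<le> e} \<and>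
              omeq (tact a (dd (gam 1)) +
                    (\<Sum>(p, e)\<in>S. tact (b p e) (phin ph (p ^ e) (dd (gam 1))))) 0
            \<longrightarrow> a = 0 \<and> (\<forall>(p, e)\<in>S. omeq (tact (b p e) (phin ph (p ^ e) (dd (gam 1)))) 0))
       \<and> (\<forall>p e c. prime p \<and> 1 \<le> e \<longrightarrow>
              (omeq (tact c (phin ph (p ^ e) (dd (gam 1)))) 0 \<longleftrightarrow>
               (\<exists>c'. c = dpsmult (of_nat p) c')))"
proof -
  have "\<forall>n\<ge>1. omeq (dd (gam n)) (\<Sum>i<n. tact (gam i) (phi_dx ph (n - i)))"
    and "\<forall>n\<ge>1. omeq (phi_dx ph n) (\<Sum>i<n. tsmult ((-1) ^ i) (tact (gam i) (dd (gam (n - i)))))"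
    using dd_gam_expansion[OF free der] phi_dx_expansion[OF free der] by blast+
  moreover have "\<forall>t\<in>tenspace. \<exists>a b S. finite S \<and> S \<subseteq> prime_power_indices \<and>
      omeq t (normal_form ph a b S)"
    using has_normal_form_tenspace[OF free der] unfolding has_normal_form_def by blast
  moreover have "\<forall>a b S. finite S \<and> S \<subseteq> prime_power_indices \<and> omeq (normal_form ph a b S) 0
      \<longrightarrow> a = 0 \<and> (\<forall>(p, e)\<in>S. omeq (tact (b p e) (phi_dx ph (p ^ e))) 0)"
    using normal_form_omeq_0_imp_summands_omeq_0[OF free der UA] by blast
  moreover have "\<forall>p e c. prime p \<and> 1 \<le> e \<longrightarrow>
      (omeq (tact c (phi_dx ph (p ^ e))) 0 \<longleftrightarrow> (\<exists>c'. c = dpsmult (of_nat p) c'))"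
    using tact_phi_dx_omeq_0_iff[OF free der UA] unfolding dp_divisible_def by blast
  ultimately show ?thesis
    by (intro conjI)
qed

end
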